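(* If $n\ge 1$ and $k\ge 2$ are integers, then the $k$-Pell graph $\Pi_{n,k}$ is a median graph.
   Context: For an integer $k\ge 2$, a $k$-Pell string is a finite word over the alphabet $\{0,1,\ldots,k-1,kk\}$, i.e. a word over $\{0,1,\ldots,k\}$ in which every maximal run of the letter $k$ has even length. For $n\ge 0$, the $k$-Pell graph $\Pi_{n,k}$ has as vertices all $k$-Pell strings of length $n$, and two vertices are adjacent if one is obtained from the other either by replacing a single letter $i$ by $i+1$ (or vice versa) for some $i\in\{0,1,\ldots,k-2\}$, or by replacing one factor $(k-1)(k-1)$ by $kk$ (or vice versa), in such a way that the resulting string is again a $k$-Pell string. A connected graph $G$ is a median graph if every triple $x,y,z$ of vertices has a unique median, i.e. a unique vertex lying simultaneously on a shortest $x,y$-path, a shortest $x,z$-path and a shortest $y,z$-path. *)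

theory Defs
  imports Main
begin

fun walk :: "'a set \<Rightarrow> ('a \<Rightarrow> 'a \<Rightarrow> bool) \<Rightarrow> 'a list \<Rightarrow> bool" where
  "walk V E [] = False"
| "walk V E [x] = (x \<in> V)"
| "walk V E (x # y # xs) = (x \<in> V \<and> E x y \<and> walk V E (y # xs))"

text \<open>A path from x to y of length (number of edges) length p - 1.\<close>
definition path_betw :: "'a set \<Rightarrow> ('a \<Rightarrow> 'a \<Rightarrow> bool) \<Rightarrow> 'a \<Rightarrow> 'a \<Rightarrow> 'a list \<Rightarrow> bool" where
  "path_betw V E x y p \<longleftrightarrow> walk V E p \<and> hd p = x \<and> last p = y \<and> distinct p"

definition connected_graph :: "'a set \<Rightarrow> ('a \<Rightarrow> 'a \<Rightarrow> bool) \<Rightarrow> bool" where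
  "connected_graph V E \<longleftrightarrow> V \<noteq> {} \<and> (\<forall>x\<in>V. \<forall>y\<in>V. \<exists>p. path_betw V E x y p)"

definition shortest_path :: "'a set \<Rightarrow> ('a \<Rightarrow> 'a \<Rightarrow> bool) \<Rightarrow> 'a \<Rightarrow> 'a \<Rightarrow> 'a list \<Rightarrow> bool" where
  "shortest_path V E x y p \<longleftrightarrow> path_betw V E x y p \<and>
     (\<forall>q. path_betw V E x y q \<longrightarrow> length p \<le> length q)"

definition on_shortest_path :: "'a set \<Rightarrow> ('a \<Rightarrow> 'a \<Rightarrow> bool) \<Rightarrow> 'a \<Rightarrow> 'a \<Rightarrow> 'a \<Rightarrow> bool" where
  "on_shortest_path V E x y w \<longleftrightarrow> (\<exists>p. shortest_path V E x y p \<and> w \<in> set p)"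

definition is_median :: "'a set \<Rightarrow> ('a \<Rightarrow> 'a \<Rightarrow> bool) \<Rightarrow> 'a \<Rightarrow> 'a \<Rightarrow> 'a \<Rightarrow> 'a \<Rightarrow> bool" where
  "is_median V E x y z m \<longleftrightarrow> m \<in> V \<and> on_shortest_path V E x y m \<and>
     on_shortest_path V E x z m \<and> on_shortest_path V E y z m"

definition median_graph :: "'a set \<Rightarrow> ('a \<Rightarrow> 'a \<Rightarrow> bool) \<Rightarrow> bool" where
  "median_graph V E \<longleftrightarrow> connected_graph V E \<and>
     (\<forall>x\<in>V. \<forall>y\<in>V. \<forall>z\<in>V. \<exists>!m. is_median V E x y z m)"

text \<open>Words over {0,...,k} parsed uniquely as words over the alphabet {0,...,k-1, kk}:
  equivalently every maximal run of the letter k has even length.\<close>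
fun pell_string :: "nat \<Rightarrow> nat list \<Rightarrow> bool" where
  "pell_string k [] = True"
| "pell_string k (a # w) =
     (if a < k then pell_string k w
      else if a = k then (case w of [] \<Rightarrow> False | b # w' \<Rightarrow> b = k \<and> pell_string k w')
      else False)"

definition pell_vertices :: "nat \<Rightarrow> nat \<Rightarrow> nat list set" where
  "pell_vertices n k = {w. length w = n \<and> pell_string k w}"

definition letter_step :: "nat \<Rightarrow> nat list \<Rightarrow> nat list \<Rightarrow> bool" where
  "letter_step k u v \<longleftrightarrow> (\<exists>p s i. i + 2 \<le> k \<and> u = p @ [i] @ s \<and> v = p @ [i + 1] @ s)"

definition block_step :: "nat \<Rightarrow> nat list \<Rightarrow> nat list \<Rightarrow> bool" where
  "block_step k u v \<longleftrightarrow> (\<exists>p s. u = p @ [k - 1, k - 1] @ s \<and> v = p @ [k, k] @ s)"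

definition pell_adj :: "nat \<Rightarrow> nat \<Rightarrow> nat list \<Rightarrow> nat list \<Rightarrow> bool" where
  "pell_adj n k u v \<longleftrightarrow> u \<in> pell_vertices n k \<and> v \<in> pell_vertices n k \<and>
     (letter_step k u v \<or> letter_step k v u \<or> block_step k u v \<or> block_step k v u)"

end

theory Submission
  imports Defs
begin

text \<open>Encode a \<open>k\<close>-Pell string \<open>u\<close> of length \<open>n\<close> by the vector \<open>letters_of k u\<close>, in which
  every letter \<open>k\<close> is lowered to \<open>k - 1\<close>, followed by the 0/1-vector \<open>block_starts k u\<close>
  marking the first letter of each block \<open>kk\<close>. Every edge of \<open>\<Pi>\<^sub>n\<^sub>,\<^sub>k\<close> changes one
  coordinate of the code by one, and from every vertex some neighbour has a code strictly closer
  in \<open>\<ell>\<^sub>1\<close> to that of any other given vertex; so the graph distance is the \<open>\<ell>\<^sub>1\<close> distance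
  of the codes. In \<open>\<ell>\<^sub>1\<close> the only point between each two of three points is their
  coordinatewise median, which gives uniqueness of medians. Existence holds because codes are
  closed under coordinatewise medians: a block mark survives in the median only if two of the
  three strings have a block there, and then the median also has the letters \<open>k - 1, k - 1\<close>
  under it.\<close>

section \<open>The \<open>\<ell>\<^sub>1\<close> distance and coordinatewise medians\<close>

definition nat_dist :: "nat \<Rightarrow> nat \<Rightarrow> nat" where
  "nat_dist a b = (if a \<le> b then b - a else a - b)"

text \<open>Meant for lists of equal length: the surplus of the longer list is ignored.\<close>
fun l1_dist :: "nat list \<Rightarrow> nat list \<Rightarrow> nat" where
  "l1_dist (x # xs) (y # ys) = nat_dist x y + l1_dist xs ys"
| "l1_dist _ _ = 0"

lemma nat_dist_triangle: "nat_dist a c \<le> nat_dist a b + nat_dist b c"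
  by (auto simp: nat_dist_def)

lemma nat_dist_between_iff:
  "nat_dist a m + nat_dist m b = nat_dist a b \<longleftrightarrow> min a b \<le> m \<and> m \<le> max a b"
  by (auto simp: nat_dist_def)

lemma l1_dist_self [simp]: "l1_dist xs xs = 0"
  by (induction xs) (auto simp: nat_dist_def)

lemma l1_dist_commute: "l1_dist xs ys = l1_dist ys xs"
  by (induction xs ys rule: l1_dist.induct) (auto simp: nat_dist_def)

lemma l1_dist_append:
  "length xs = length xs' \<Longrightarrow> l1_dist (xs @ ys) (xs' @ ys') = l1_dist xs xs' + l1_dist ys ys'"
  by (induction xs xs' rule: l1_dist.induct) auto

lemma l1_dist_triangle:
  "length xs = length ys \<Longrightarrow> length ys = length zs \<Longrightarrow> l1_dist xs zs \<le> l1_dist xs ys + l1_dist ys zs"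
proof (induction xs arbitrary: ys zs)
  case (Cons x xs)
  then obtain y ys' z zs' where yz: "ys = y # ys'" "zs = z # zs'"
    by (cases ys; cases zs) auto
  with Cons have "l1_dist xs zs' \<le> l1_dist xs ys' + l1_dist ys' zs'"
    by simp
  with nat_dist_triangle[where a = x and b = y and c = z] show ?case
    by (simp add: yz)
qed simp

lemma l1_dist_between_Cons_iff:
  assumes "length as = length ms" "length ms = length bs"
  shows "l1_dist (a # as) (m # ms) + l1_dist (m # ms) (b # bs) = l1_dist (a # as) (b # bs) \<longleftrightarrow>
    nat_dist a m + nat_dist m b = nat_dist a b \<and> l1_dist as ms + l1_dist ms bs = l1_dist as bs"
  using l1_dist_triangle[OF assms] nat_dist_triangle[where a = a and b = m and c = b]
  unfolding l1_dist.simps by linarith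

definition median3 :: "nat \<Rightarrow> nat \<Rightarrow> nat \<Rightarrow> nat" where
  "median3 a b c = max (min a b) (min (max a b) c)"

lemma median3_between:
  "min a b \<le> median3 a b c \<and> median3 a b c \<le> max a b"
  "min a c \<le> median3 a b c \<and> median3 a b c \<le> max a c"
  "min b c \<le> median3 a b c \<and> median3 a b c \<le> max b c"
  by (auto simp: median3_def)

lemma median3_unique:
  "min a b \<le> m \<and> m \<le> max a b \<Longrightarrow> min a c \<le> m \<and> m \<le> max a c \<Longrightarrow>
   min b c \<le> m \<and> m \<le> max b c \<Longrightarrow> m = median3 a b c"
  unfolding median3_def min_def max_def by auto

lemma median3_majority:
  "a = t \<and> b = t \<or> a = t \<and> c = t \<or> b = t \<and> c = t \<Longrightarrow> median3 a b c = t"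
  by (auto simp: median3_def)

lemma median3_le: "a \<le> t \<Longrightarrow> b \<le> t \<Longrightarrow> c \<le> t \<Longrightarrow> median3 a b c \<le> t"
  by (auto simp: median3_def)

lemma median3_eq_1_bitsD:
  "a \<le> 1 \<Longrightarrow> b \<le> 1 \<Longrightarrow> c \<le> 1 \<Longrightarrow> median3 a b c = 1 \<Longrightarrow>
   a = 1 \<and> b = 1 \<or> a = 1 \<and> c = 1 \<or> b = 1 \<and> c = 1"
  by (auto simp: median3_def)

fun median_list :: "nat list \<Rightarrow> nat list \<Rightarrow> nat list \<Rightarrow> nat list" where
  "median_list (a # as) (b # bs) (c # cs) = median3 a b c # median_list as bs cs"
| "median_list _ _ _ = []"

lemma length_median_list [simp]:
  "length (median_list as bs cs) = min (length as) (min (length bs) (length cs))"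
  by (induction as bs cs rule: median_list.induct) auto

lemma median_list_append:
  "length as = length bs \<Longrightarrow> length bs = length cs \<Longrightarrow>
   median_list (as @ as') (bs @ bs') (cs @ cs') = median_list as bs cs @ median_list as' bs' cs'"
  by (induction as bs cs rule: median_list.induct) auto

lemma l1_dist_median_list_between:
  assumes "length as = length bs" "length bs = length cs"
  shows "l1_dist as (median_list as bs cs) + l1_dist (median_list as bs cs) bs = l1_dist as bs \<and>
    l1_dist as (median_list as bs cs) + l1_dist (median_list as bs cs) cs = l1_dist as cs \<and>
    l1_dist bs (median_list as bs cs) + l1_dist (median_list as bs cs) cs = l1_dist bs cs"
  using assms
  by (induction as bs cs rule: median_list.induct)
     (simp_all add: l1_dist_between_Cons_iff nat_dist_between_iff median3_between del: l1_dist.simps)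

lemma median_list_unique:
  "length as = length ms \<Longrightarrow> length bs = length ms \<Longrightarrow> length cs = length ms \<Longrightarrow>
   l1_dist as ms + l1_dist ms bs = l1_dist as bs \<Longrightarrow> l1_dist as ms + l1_dist ms cs = l1_dist as cs \<Longrightarrow>
   l1_dist bs ms + l1_dist ms cs = l1_dist bs cs \<Longrightarrow> ms = median_list as bs cs"
proof (induction ms arbitrary: as bs cs)
  case (Cons m ms)
  then obtain a as' b bs' c cs' where "as = a # as'" "bs = b # bs'" "cs = c # cs'"
    by (auto simp: length_Suc_conv)
  with Cons show ?case
    by (simp add: l1_dist_between_Cons_iff nat_dist_between_iff median3_unique del: l1_dist.simps)
qed simp

section \<open>Graphs whose distance is given by a function\<close>

lemma walk_append_iff: "walk V E (xs @ y # ys) \<longleftrightarrow> walk V E (xs @ [y]) \<and> walk V E (y # ys)"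
proof (induction xs)
  case Nil
  then show ?case by (cases ys) auto
next
  case (Cons x xs)
  then show ?case by (cases xs) auto
qed

lemma walk_subset: "walk V E q \<Longrightarrow> set q \<subseteq> V"
  by (induction V E q rule: walk.induct) auto

lemma walk_not_Nil: "walk V E q \<Longrightarrow> q \<noteq> []"
  by (cases q) auto

locale graph_distance =
  fixes V :: "'a set" and E :: "'a \<Rightarrow> 'a \<Rightarrow> bool" and d :: "'a \<Rightarrow> 'a \<Rightarrow> nat"
  assumes dist_self: "u \<in> V \<Longrightarrow> d u u = 0"
    and dist_adj_le_1: "u \<in> V \<Longrightarrow> v \<in> V \<Longrightarrow> E u v \<Longrightarrow> d u v \<le> 1"
    and dist_triangle: "u \<in> V \<Longrightarrow> v \<in> V \<Longrightarrow> w \<in> V \<Longrightarrow> d u w \<le> d u v + d v w"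
    and exists_closer_neighbour: "u \<in> V \<Longrightarrow> v \<in> V \<Longrightarrow> u \<noteq> v \<Longrightarrow> \<exists>u'\<in>V. E u u' \<and> d u' v < d u v"
begin

lemma walk_length_ge: "walk V E q \<Longrightarrow> d (hd q) (last q) + 1 \<le> length q"
proof (induction q rule: induct_list012)
  case (3 x y xs)
  then have "x \<in> V" "y \<in> V" "last (y # xs) \<in> V" "E x y"
    using walk_subset[of V E "y # xs"] by auto
  then have "d x (last (y # xs)) \<le> 1 + d y (last (y # xs))"
    using dist_triangle[of x y "last (y # xs)"] dist_adj_le_1[of x y] by linarith
  with 3 show ?case by simp
qed (auto simp: dist_self)

lemma dist_eq_0_imp_eq: "u \<in> V \<Longrightarrow> v \<in> V \<Longrightarrow> d u v = 0 \<Longrightarrow> u = v"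
  using exists_closer_neighbour by (metis less_nat_zero_code)

lemma exists_geodesic:
  "u \<in> V \<Longrightarrow> v \<in> V \<Longrightarrow> \<exists>q. walk V E q \<and> hd q = u \<and> last q = v \<and> length q = d u v + 1"
proof (induction "d u v" arbitrary: u rule: less_induct)
  case less
  show ?case
  proof (cases "u = v")
    case True
    with less.prems show ?thesis
      by (intro exI[of _ "[u]"]) (simp add: dist_self)
  next
    case False
    with less.prems obtain u' where u': "u' \<in> V" "E u u'" "d u' v < d u v"
      using exists_closer_neighbour by blast
    obtain q where q: "walk V E q" "hd q = u'" "last q = v" "length q = d u' v + 1"
      using less.hyps[OF u'(3) u'(1) less.prems(2)] by blast
    have "d u v \<le> 1 + d u' v"
      using dist_triangle[of u u' v] dist_adj_le_1[of u u'] less.prems u' by linarith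
    moreover have "walk V E (u # q)"
      using q u' less.prems by (cases q) auto
    ultimately show ?thesis
      using q u' walk_not_Nil[OF q(1)] by (intro exI[of _ "u # q"]) simp
  qed
qed

lemma geodesic_distinct:
  assumes "walk V E q" "length q = d (hd q) (last q) + 1"
  shows "distinct q"
proof (rule ccontr)
  assume "\<not> distinct q"
  then obtain xs ys zs y where q: "q = xs @ [y] @ ys @ [y] @ zs"
    using not_distinct_decomp by blast
  with assms(1) have "walk V E (xs @ [y])" "walk V E (y # ys @ [y])" "walk V E (y # zs)"
    using walk_append_iff[of V E xs y "ys @ y # zs"] walk_append_iff[of V E "y # ys" y zs]
    by simp_all
  then have "walk V E (xs @ y # zs)"
    using walk_append_iff[of V E xs y zs] by blast
  moreover have "hd (xs @ y # zs) = hd q" "last (xs @ y # zs) = last q"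
    using q by (simp_all add: hd_append)
  ultimately show False
    using walk_length_ge[of "xs @ y # zs"] assms(2) q by simp
qed

lemma shortest_path_iff:
  assumes "x \<in> V" "y \<in> V"
  shows "shortest_path V E x y p \<longleftrightarrow> walk V E p \<and> hd p = x \<and> last p = y \<and> length p = d x y + 1"
proof
  obtain q where q: "walk V E q" "hd q = x" "last q = y" "length q = d x y + 1"
    using exists_geodesic[OF assms] by blast
  then have "path_betw V E x y q"
    using geodesic_distinct by (simp add: path_betw_def)
  moreover assume "shortest_path V E x y p"
  ultimately have "walk V E p" "hd p = x" "last p = y" "length p \<le> d x y + 1"
    using q unfolding shortest_path_def path_betw_def by auto
  with walk_length_ge[of p] show "walk V E p \<and> hd p = x \<and> last p = y \<and> length p = d x y + 1"
    by simp
next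
  assume p: "walk V E p \<and> hd p = x \<and> last p = y \<and> length p = d x y + 1"
  then have "distinct p"
    using geodesic_distinct by simp
  moreover have "length p \<le> length r" if "path_betw V E x y r" for r
    using walk_length_ge[of r] that p by (auto simp: path_betw_def)
  ultimately show "shortest_path V E x y p"
    using p by (simp add: shortest_path_def path_betw_def)
qed

lemma on_shortest_path_iff:
  assumes x: "x \<in> V" and y: "y \<in> V"
  shows "on_shortest_path V E x y w \<longleftrightarrow> w \<in> V \<and> d x w + d w y = d x y"
proof
  assume "on_shortest_path V E x y w"
  then obtain p where p: "walk V E p" "hd p = x" "last p = y" "length p = d x y + 1" "w \<in> set p"
    using shortest_path_iff[OF x y] by (auto simp: on_shortest_path_def)
  then have w: "w \<in> V"
    using walk_subset by blast
  from p obtain as bs where p_split: "p = as @ w # bs"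
    by (meson split_list)
  with p have as: "walk V E (as @ [w])" "hd (as @ [w]) = x"
    and bs: "walk V E (w # bs)" "last (w # bs) = y"
    using walk_append_iff[of V E as w bs] by (auto simp: hd_append)
  have "d x w \<le> length as" "d w y \<le> length bs"
    using walk_length_ge[OF as(1)] walk_length_ge[OF bs(1)] as(2) bs(2) by simp_all
  with p p_split dist_triangle[OF x w y] w show "w \<in> V \<and> d x w + d w y = d x y"
    by simp
next
  assume w: "w \<in> V \<and> d x w + d w y = d x y"
  obtain q1 where q1: "walk V E q1" "hd q1 = x" "last q1 = w" "length q1 = d x w + 1"
    using exists_geodesic x w by blast
  obtain q2 where q2: "walk V E q2" "hd q2 = w" "last q2 = y" "length q2 = d w y + 1"
    using exists_geodesic y w by blast
  obtain as bs where "q1 = as @ [w]" "q2 = w # bs"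
    using q1 q2 walk_not_Nil append_butlast_last_id[of q1] list.collapse[of q2] by metis
  with q1 q2 w have "walk V E (as @ w # bs) \<and> hd (as @ w # bs) = x \<and> last (as @ w # bs) = y \<and>
      length (as @ w # bs) = d x y + 1"
    using walk_append_iff[of V E as w bs] by (auto simp: hd_append)
  then have "shortest_path V E x y (as @ w # bs)"
    using shortest_path_iff[OF x y] by blast
  then show "on_shortest_path V E x y w"
    unfolding on_shortest_path_def by auto
qed

lemma connected: "V \<noteq> {} \<Longrightarrow> connected_graph V E"
proof -
  have "\<exists>p. path_betw V E x y p" if xy: "x \<in> V" "y \<in> V" for x y
  proof -
    obtain q where "walk V E q" "hd q = x" "last q = y" "length q = d x y + 1"
      using exists_geodesic[OF xy] by blast
    then have "path_betw V E x y q"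
      using geodesic_distinct by (simp add: path_betw_def)
    then show ?thesis ..
  qed
  then show "V \<noteq> {} \<Longrightarrow> connected_graph V E"
    by (simp add: connected_graph_def)
qed

lemma is_median_iff:
  "x \<in> V \<Longrightarrow> y \<in> V \<Longrightarrow> z \<in> V \<Longrightarrow> is_median V E x y z m \<longleftrightarrow>
     m \<in> V \<and> d x m + d m y = d x y \<and> d x m + d m z = d x z \<and> d y m + d m z = d y z"
  by (auto simp: is_median_def on_shortest_path_iff)

lemma median_graphI:
  assumes "V \<noteq> {}"
    and "\<And>x y z. x \<in> V \<Longrightarrow> y \<in> V \<Longrightarrow> z \<in> V \<Longrightarrow>
      \<exists>!m. m \<in> V \<and> d x m + d m y = d x y \<and> d x m + d m z = d x z \<and> d y m + d m z = d y z"
  shows "median_graph V E"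
  using assms connected by (simp add: median_graph_def is_median_iff)

end

section \<open>Pell strings and their encoding\<close>

inductive pell :: "nat \<Rightarrow> nat list \<Rightarrow> bool" for k :: nat where
  pell_Nil: "pell k []"
| pell_letter: "x < k \<Longrightarrow> pell k w \<Longrightarrow> pell k (x # w)"
| pell_block: "pell k w \<Longrightarrow> pell k (k # k # w)"

lemma pell_string_iff_pell: "pell_string k w \<longleftrightarrow> pell k w"
proof
  show "pell_string k w \<Longrightarrow> pell k w"
    by (induction k w rule: pell_string.induct)
       (auto split: if_splits list.splits intro: pell.intros)
  show "pell k w \<Longrightarrow> pell_string k w"
    by (induction rule: pell.induct) auto
qed

lemma pell_split_at_letter: "pell k w \<Longrightarrow> w = p @ x # s \<Longrightarrow> x < k \<Longrightarrow> pell k p \<and> pell k s"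
proof (induction arbitrary: p rule: pell.induct)
  case (pell_letter y w)
  then show ?case
    by (cases p) (auto intro: pell.intros)
next
  case (pell_block w)
  then show ?case
    by (cases p; cases "tl p") (auto intro: pell.intros)
qed simp

lemma in_pell_vertices_iff: "u \<in> pell_vertices n k \<longleftrightarrow> length u = n \<and> pell k u"
  by (simp add: pell_vertices_def pell_string_iff_pell)

lemma replicate_0_in_pell_vertices: "0 < k \<Longrightarrow> replicate n 0 \<in> pell_vertices n k"
  by (induction n) (auto simp: in_pell_vertices_iff intro: pell.intros)

definition pell_step :: "nat \<Rightarrow> nat list \<Rightarrow> nat list \<Rightarrow> bool" where
  "pell_step k u v \<longleftrightarrow> letter_step k u v \<or> letter_step k v u \<or> block_step k u v \<or> block_step k v u"

lemma pell_adj_iff: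
  "pell_adj n k u v \<longleftrightarrow> u \<in> pell_vertices n k \<and> v \<in> pell_vertices n k \<and> pell_step k u v"
  by (simp add: pell_adj_def pell_step_def)

lemma letter_stepI: "i + 2 \<le> k \<Longrightarrow> letter_step k (p @ i # s) (p @ Suc i # s)"
  by (auto simp: letter_step_def)

lemma block_stepI: "block_step k (p @ (k - 1) # (k - 1) # s) (p @ k # k # s)"
  by (auto simp: block_step_def)

lemma letter_step_Cons:
  assumes "letter_step k u v"
  shows "letter_step k (c # u) (c # v)"
proof -
  from assms obtain p s i where "i + 2 \<le> k" "u = p @ i # s" "v = p @ Suc i # s"
    by (auto simp: letter_step_def)
  then show ?thesis
    using letter_stepI[of i k "c # p" s] by simp
qed

lemma block_step_Cons:
  assumes "block_step k u v"
  shows "block_step k (c # u) (c # v)"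
proof -
  from assms obtain p s where "u = p @ (k - 1) # (k - 1) # s" "v = p @ k # k # s"
    by (auto simp: block_step_def)
  then show ?thesis
    using block_stepI[of k "c # p" s] by simp
qed

lemma pell_step_Cons: "pell_step k u v \<Longrightarrow> pell_step k (c # u) (c # v)"
  unfolding pell_step_def using letter_step_Cons block_step_Cons by blast

definition letters_of :: "nat \<Rightarrow> nat list \<Rightarrow> nat list" where
  "letters_of k u = map (\<lambda>x. min x (k - 1)) u"

fun block_starts :: "nat \<Rightarrow> nat list \<Rightarrow> nat list" where
  "block_starts k [] = []"
| "block_starts k [x] = [0]"
| "block_starts k (x # y # w) = (if x = k then 1 # 0 # block_starts k w else 0 # block_starts k (y # w))"

lemma letters_of_simps [simp]:
  "letters_of k [] = []"
  "x < k \<Longrightarrow> letters_of k (x # u) = x # letters_of k u"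
  "letters_of k (k # u) = (k - 1) # letters_of k u"
  "length (letters_of k u) = length u"
  by (auto simp: letters_of_def)

lemma block_starts_Cons_letter [simp]: "x \<noteq> k \<Longrightarrow> block_starts k (x # w) = 0 # block_starts k w"
  by (cases w) auto

lemma length_block_starts [simp]: "length (block_starts k w) = length w"
  by (induction k w rule: block_starts.induct) auto

lemma block_starts_append: "pell k p \<Longrightarrow> block_starts k (p @ w) = block_starts k p @ block_starts k w"
  by (induction rule: pell.induct) auto

definition pell_dist :: "nat \<Rightarrow> nat list \<Rightarrow> nat list \<Rightarrow> nat" where
  "pell_dist k u v = l1_dist (letters_of k u) (letters_of k v) + l1_dist (block_starts k u) (block_starts k v)"

definition encode :: "nat \<Rightarrow> nat list \<Rightarrow> nat list" where
  "encode k u = letters_of k u @ block_starts k u"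

lemma length_encode [simp]: "length (encode k u) = 2 * length u"
  by (simp add: encode_def)

lemma pell_dist_encode: "length u = length v \<Longrightarrow> pell_dist k u v = l1_dist (encode k u) (encode k v)"
  by (simp add: pell_dist_def encode_def l1_dist_append)

lemma pell_dist_self [simp]: "pell_dist k u u = 0"
  by (simp add: pell_dist_def)

lemma pell_dist_commute: "pell_dist k u v = pell_dist k v u"
  by (simp add: pell_dist_def l1_dist_commute)

lemma pell_dist_triangle:
  "length u = length v \<Longrightarrow> length v = length w \<Longrightarrow> pell_dist k u w \<le> pell_dist k u v + pell_dist k v w"
  by (simp add: pell_dist_encode l1_dist_triangle)

lemma pell_dist_Cons_letter [simp]: "x < k \<Longrightarrow> pell_dist k (x # u) (x # v) = pell_dist k u v"
  by (simp add: pell_dist_def nat_dist_def)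

lemma pell_dist_Cons_block [simp]: "pell_dist k (k # k # u) (k # k # v) = pell_dist k u v"
  by (simp add: pell_dist_def nat_dist_def)

lemma pell_dist_letter_step:
  assumes "pell k u" "letter_step k u v"
  shows "pell_dist k u v = 1"
proof -
  obtain p s i where i: "i + 2 \<le> k" and u: "u = p @ i # s" and v: "v = p @ Suc i # s"
    using assms(2) by (auto simp: letter_step_def)
  have "pell k p"
    using pell_split_at_letter[OF assms(1) u] i by simp
  with i show ?thesis
    unfolding u v pell_dist_def by (simp add: block_starts_append letters_of_def l1_dist_append nat_dist_def)
qed

lemma pell_dist_block_step:
  assumes "0 < k" "pell k u" "block_step k u v"
  shows "pell_dist k u v = 1"
proof -
  obtain p s where u: "u = p @ (k - 1) # (k - 1) # s" and v: "v = p @ k # k # s"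
    using assms(3) by (auto simp: block_step_def)
  have "pell k p"
    using pell_split_at_letter[OF assms(2) u] assms(1) by simp
  with assms(1) show ?thesis
    unfolding u v pell_dist_def by (simp add: block_starts_append letters_of_def l1_dist_append nat_dist_def)
qed

lemma pell_dist_step:
  assumes "0 < k" "pell k u" "pell k v" "pell_step k u v"
  shows "pell_dist k u v = 1"
proof -
  consider "letter_step k u v" | "letter_step k v u" | "block_step k u v" | "block_step k v u"
    using assms(4) unfolding pell_step_def by blast
  then show ?thesis
  proof cases
    case 1
    then show ?thesis by (rule pell_dist_letter_step[OF assms(2)])
  next
    case 2
    then show ?thesis by (simp add: pell_dist_commute[of k u] pell_dist_letter_step[OF assms(3)])
  next
    case 3
    then show ?thesis by (rule pell_dist_block_step[OF assms(1,2)])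
  next
    case 4
    then show ?thesis by (simp add: pell_dist_commute[of k u] pell_dist_block_step[OF assms(1,3)])
  qed
qed

definition closer_neighbour :: "nat \<Rightarrow> nat list \<Rightarrow> nat list \<Rightarrow> nat list \<Rightarrow> bool" where
  "closer_neighbour k v u u' \<longleftrightarrow>
     pell k u' \<and> length u' = length u \<and> pell_step k u u' \<and> pell_dist k u' v < pell_dist k u v"

lemma closer_neighbour_Cons_letter:
  "x < k \<Longrightarrow> closer_neighbour k v u u' \<Longrightarrow> closer_neighbour k (x # v) (x # u) (x # u')"
  by (simp add: closer_neighbour_def pell_step_Cons pell_letter)

lemma closer_neighbour_Cons_block:
  "closer_neighbour k v u u' \<Longrightarrow> closer_neighbour k (k # k # v) (k # k # u) (k # k # u')"
  by (simp add: closer_neighbour_def pell_step_Cons pell_block)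

lemma closer_neighbour_letter_letter:
  assumes "x < k" "y < k" "x \<noteq> y" "pell k u"
  shows "\<exists>u'. closer_neighbour k (y # v) (x # u) u'"
proof (cases "x < y")
  case True
  then have "letter_step k (x # u) (Suc x # u)"
    using letter_stepI[of x k "[]" u] assms(2) by simp
  with True assms show ?thesis
    by (intro exI[of _ "Suc x # u"])
       (auto simp: closer_neighbour_def pell_step_def pell_dist_def nat_dist_def intro: pell_letter)
next
  case False
  with assms(3) have "letter_step k ((x - 1) # u) (x # u)"
    using letter_stepI[of "x - 1" k "[]" u] assms(1) by simp
  with False assms show ?thesis
    by (intro exI[of _ "(x - 1) # u"])
       (auto simp: closer_neighbour_def pell_step_def pell_dist_def nat_dist_def intro: pell_letter)
qed

lemma closer_neighbour_block_letter:
  assumes "0 < k" "y < k" "pell k u"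
  shows "closer_neighbour k (y # v) (k # k # u) ((k - 1) # (k - 1) # u)"
proof -
  have "block_step k ((k - 1) # (k - 1) # u) (k # k # u)"
    using block_stepI[of k "[]" u] by simp
  moreover have "pell k ((k - 1) # (k - 1) # u)"
    using assms by (simp add: pell_letter)
  ultimately show ?thesis
    using assms by (auto simp: closer_neighbour_def pell_step_def pell_dist_def nat_dist_def)
qed

lemma closer_neighbour_top_letter_block:
  assumes "0 < k" "pell k u" "length u = Suc (length v)"
  shows "\<exists>u'. closer_neighbour k (k # k # v) ((k - 1) # u) u'"
  using assms(2)
proof cases
  case pell_Nil
  with assms(3) show ?thesis by simp
next
  case (pell_letter x w)
  show ?thesis
  proof (cases "Suc x < k")
    case True
    then have "letter_step k ((k - 1) # x # w) ((k - 1) # Suc x # w)"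
      using letter_stepI[of x k "[k - 1]" w] by simp
    with True assms(1) pell_letter show ?thesis
      by (intro exI[of _ "(k - 1) # Suc x # w"])
         (auto simp: closer_neighbour_def pell_step_def pell_dist_def nat_dist_def intro: pell.intros)
  next
    case False
    with pell_letter have "x = k - 1" by simp
    then have "block_step k ((k - 1) # x # w) (k # k # w)"
      using block_stepI[of k "[]" w] by simp
    with assms(1) pell_letter \<open>x = k - 1\<close> show ?thesis
      by (intro exI[of _ "k # k # w"])
         (auto simp: closer_neighbour_def pell_step_def pell_dist_def nat_dist_def intro: pell.intros)
  qed
next
  case (pell_block w)
  \<comment> \<open>the block of \<open>u\<close> is out of phase with the leading block of the target: dissolve it\<close>
  have "block_step k ((k - 1) # (k - 1) # (k - 1) # w) ((k - 1) # k # k # w)"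
    using block_stepI[of k "[k - 1]" w] by simp
  moreover have "pell k ((k - 1) # (k - 1) # (k - 1) # w)"
    using assms(1) pell_block by (simp add: pell_letter)
  ultimately show ?thesis
    using assms(1) pell_block
    by (intro exI[of _ "(k - 1) # (k - 1) # (k - 1) # w"])
       (auto simp: closer_neighbour_def pell_step_def pell_dist_def nat_dist_def)
qed

lemma closer_neighbour_letter_block:
  assumes "x < k" "pell k u" "length u = Suc (length v)"
  shows "\<exists>u'. closer_neighbour k (k # k # v) (x # u) u'"
proof (cases "Suc x < k")
  case True
  then have "letter_step k (x # u) (Suc x # u)"
    using letter_stepI[of x k "[]" u] by simp
  with True assms(2) show ?thesis
    by (intro exI[of _ "Suc x # u"])
       (auto simp: closer_neighbour_def pell_step_def pell_dist_def nat_dist_def intro: pell_letter)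
next
  case False
  with assms(1) have "x = k - 1" "0 < k" by simp_all
  with closer_neighbour_top_letter_block assms(2,3) show ?thesis by simp
qed

lemma pell_exists_closer_neighbour:
  "pell k u \<Longrightarrow> pell k v \<Longrightarrow> length u = length v \<Longrightarrow> u \<noteq> v \<Longrightarrow> \<exists>u'. closer_neighbour k v u u'"
proof (induction u arbitrary: v rule: pell.induct)
  case pell_Nil
  then show ?case by simp
next
  case (pell_letter x u)
  note x = \<open>x < k\<close> and IH = pell_letter.IH and prems = pell_letter.prems
  from \<open>pell k v\<close> show ?case
  proof cases
    case pell_Nil
    with prems show ?thesis by simp
  next
    case (pell_letter y v')
    show ?thesis
    proof (cases "x = y")
      case True
      with prems pell_letter obtain u' where "closer_neighbour k v' u u'"
        using IH[of v'] by auto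
      with x True pell_letter show ?thesis
        using closer_neighbour_Cons_letter by blast
    qed (use x pell_letter \<open>pell k u\<close> closer_neighbour_letter_letter in simp)
  next
    case (pell_block v')
    with x prems \<open>pell k u\<close> show ?thesis
      using closer_neighbour_letter_block[of x k u v'] by simp
  qed
next
  case (pell_block u)
  note IH = pell_block.IH and prems = pell_block.prems
  from \<open>pell k v\<close> show ?case
  proof cases
    case pell_Nil
    with prems show ?thesis by simp
  next
    case (pell_letter y v')
    with \<open>pell k u\<close> show ?thesis
      using closer_neighbour_block_letter[of k y u v'] by auto
  next
    case (pell_block v')
    with prems obtain u' where "closer_neighbour k v' u u'"
      using IH[of v'] by auto
    with pell_block show ?thesis
      using closer_neighbour_Cons_block by blast
  qed
qed

lemma pell_graph_distance:
  assumes "0 < k"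
  shows "graph_distance (pell_vertices n k) (pell_adj n k) (pell_dist k)"
proof
  fix u v w
  assume u: "u \<in> pell_vertices n k" and v: "v \<in> pell_vertices n k"
  then show "pell_dist k u u = 0"
    by simp
  show "pell_adj n k u v \<Longrightarrow> pell_dist k u v \<le> 1"
    using pell_dist_step[OF assms] u v by (simp add: pell_adj_iff in_pell_vertices_iff)
  show "w \<in> pell_vertices n k \<Longrightarrow> pell_dist k u w \<le> pell_dist k u v + pell_dist k v w"
    using u v by (simp add: in_pell_vertices_iff pell_dist_triangle)
  show "\<exists>u'\<in>pell_vertices n k. pell_adj n k u u' \<and> pell_dist k u' v < pell_dist k u v" if uv: "u \<noteq> v"
  proof -
    obtain u' where "closer_neighbour k v u u'"
      using pell_exists_closer_neighbour[of k u v] u v uv by (auto simp: in_pell_vertices_iff)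
    with u show ?thesis
      by (auto simp: closer_neighbour_def pell_adj_iff in_pell_vertices_iff)
  qed
qed

section \<open>Medians of Pell strings\<close>

fun pell_code :: "nat \<Rightarrow> nat list \<Rightarrow> nat list \<Rightarrow> bool" where
  "pell_code k [] [] \<longleftrightarrow> True"
| "pell_code k (a # as) (b # bs) \<longleftrightarrow> a \<le> k - 1 \<and> b \<le> 1 \<and>
     (b = 1 \<longrightarrow> as \<noteq> [] \<and> hd as = k - 1 \<and> hd bs = 0 \<and> a = k - 1) \<and> pell_code k as bs"
| "pell_code k _ _ \<longleftrightarrow> False"

lemma pell_code_Nil_iff [simp]: "pell_code k [] bs \<longleftrightarrow> bs = []"
  by (cases bs) auto

lemma pell_code_length: "pell_code k as bs \<Longrightarrow> length as = length bs"
  by (induction k as bs rule: pell_code.induct) auto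

lemma pell_code_encode: "pell k u \<Longrightarrow> pell_code k (letters_of k u) (block_starts k u)"
  by (induction rule: pell.induct) (auto simp: letters_of_def)

lemma pell_code_decode:
  "0 < k \<Longrightarrow> pell_code k as bs \<Longrightarrow> \<exists>u. pell k u \<and> letters_of k u = as \<and> block_starts k u = bs"
proof (induction as arbitrary: bs rule: induct_list012)
  case 1
  then show ?case by (cases bs) (auto intro: pell.intros)
next
  case (2 a)
  then obtain b where "bs = [b]"
    by (cases bs) (auto dest: pell_code_length)
  with 2 show ?case
    by (intro exI[of _ "[a]"]) (auto intro: pell.intros)
next
  case (3 a a' as)
  then obtain b b' bs' where bs: "bs = b # b' # bs'"
    using pell_code_length by (metis Suc_length_conv)
  show ?case
  proof (cases "b = 1")
    case False
    with 3 bs have "pell_code k (a' # as) (b' # bs')" "a < k" "b = 0"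
      by auto
    then obtain u where "pell k u" "letters_of k u = a' # as" "block_starts k u = b' # bs'"
      using 3 by blast
    with bs \<open>a < k\<close> \<open>b = 0\<close> show ?thesis
      by (intro exI[of _ "a # u"]) (auto intro: pell.intros)
  next
    case True
    with 3 bs have "pell_code k as bs'" "a = k - 1" "a' = k - 1" "b' = 0"
      by auto
    then obtain u where "pell k u" "letters_of k u = as" "block_starts k u = bs'"
      using 3 by blast
    with bs True \<open>a = k - 1\<close> \<open>a' = k - 1\<close> \<open>b' = 0\<close> show ?thesis
      by (intro exI[of _ "k # k # u"]) (auto intro: pell.intros)
  qed
qed

lemma pell_code_median_list:
  "pell_code k as1 bs1 \<Longrightarrow> pell_code k as2 bs2 \<Longrightarrow> pell_code k as3 bs3 \<Longrightarrow>
   length as1 = length as2 \<Longrightarrow> length as2 = length as3 \<Longrightarrow>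
   pell_code k (median_list as1 as2 as3) (median_list bs1 bs2 bs3)"
proof (induction as1 as2 as3 arbitrary: bs1 bs2 bs3 rule: median_list.induct)
  case (1 a1 as1 a2 as2 a3 as3)
  then obtain b1 bs1' b2 bs2' b3 bs3' where bs: "bs1 = b1 # bs1'" "bs2 = b2 # bs2'" "bs3 = b3 # bs3'"
    by (cases bs1; cases bs2; cases bs3) auto
  have block_head: "median_list as1 as2 as3 \<noteq> [] \<and> hd (median_list as1 as2 as3) = k - 1 \<and>
      hd (median_list bs1' bs2' bs3') = 0 \<and> median3 a1 a2 a3 = k - 1"
    if "median3 b1 b2 b3 = 1"
  proof -
    have two: "b1 = 1 \<and> b2 = 1 \<or> b1 = 1 \<and> b3 = 1 \<or> b2 = 1 \<and> b3 = 1"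
      using 1 bs that median3_eq_1_bitsD[of b1 b2 b3] by auto
    then have "as1 \<noteq> []"
      using "1.prems" bs by auto
    then obtain h1 t1 h2 t2 h3 t3 where as: "as1 = h1 # t1" "as2 = h2 # t2" "as3 = h3 # t3"
      using "1.prems" by (cases as1; cases as2; cases as3) auto
    moreover obtain g1 s1 g2 s2 g3 s3 where "bs1' = g1 # s1" "bs2' = g2 # s2" "bs3' = g3 # s3"
      using "1.prems" bs as pell_code_length[of k as1 bs1'] pell_code_length[of k as2 bs2']
        pell_code_length[of k as3 bs3'] by (cases bs1'; cases bs2'; cases bs3') auto
    ultimately show ?thesis
      using two "1.prems" bs by (elim disjE) (auto intro: median3_majority)
  qed
  have "pell_code k (median_list as1 as2 as3) (median_list bs1' bs2' bs3')"
    using 1 bs by auto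
  with 1 bs block_head show ?case
    by (auto intro: median3_le)
qed auto

lemma exists_pell_median:
  assumes "0 < k" "x \<in> pell_vertices n k" "y \<in> pell_vertices n k" "z \<in> pell_vertices n k"
  shows "\<exists>m \<in> pell_vertices n k. encode k m = median_list (encode k x) (encode k y) (encode k z)"
proof -
  have xyz: "pell k x" "pell k y" "pell k z" "length x = n" "length y = n" "length z = n"
    using assms(2-4) by (simp_all add: in_pell_vertices_iff)
  then have "pell_code k (median_list (letters_of k x) (letters_of k y) (letters_of k z))
      (median_list (block_starts k x) (block_starts k y) (block_starts k z))"
    by (simp add: pell_code_median_list pell_code_encode)
  then obtain m where m: "pell k m"
    "letters_of k m = median_list (letters_of k x) (letters_of k y) (letters_of k z)"
    "block_starts k m = median_list (block_starts k x) (block_starts k y) (block_starts k z)"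
    using pell_code_decode[OF assms(1)] by blast
  have "length (letters_of k m) = n"
    using m(2) xyz by simp
  then have "length m = n"
    by simp
  with m xyz show ?thesis
    by (auto simp: in_pell_vertices_iff encode_def median_list_append)
qed

lemma pell_between_iff_encode_median:
  assumes "x \<in> pell_vertices n k" "y \<in> pell_vertices n k" "z \<in> pell_vertices n k"
    "m \<in> pell_vertices n k"
  shows "pell_dist k x m + pell_dist k m y = pell_dist k x y \<and>
      pell_dist k x m + pell_dist k m z = pell_dist k x z \<and>
      pell_dist k y m + pell_dist k m z = pell_dist k y z \<longleftrightarrow>
    encode k m = median_list (encode k x) (encode k y) (encode k z)"
  using assms median_list_unique[of "encode k x" "encode k m" "encode k y" "encode k z"]
    l1_dist_median_list_between[of "encode k x" "encode k y" "encode k z"]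
  by (auto simp: in_pell_vertices_iff pell_dist_encode)

lemma inj_on_encode: "0 < k \<Longrightarrow> inj_on (encode k) (pell_vertices n k)"
  using graph_distance.dist_eq_0_imp_eq[OF pell_graph_distance]
  by (fastforce simp: inj_on_def in_pell_vertices_iff pell_dist_encode)

lemma pell_unique_median:
  assumes "0 < k" "x \<in> pell_vertices n k" "y \<in> pell_vertices n k" "z \<in> pell_vertices n k"
  shows "\<exists>!m. m \<in> pell_vertices n k \<and> pell_dist k x m + pell_dist k m y = pell_dist k x y \<and>
      pell_dist k x m + pell_dist k m z = pell_dist k x z \<and> pell_dist k y m + pell_dist k m z = pell_dist k y z"
  using exists_pell_median[OF assms] pell_between_iff_encode_median[OF assms(2-4)]
    inj_on_encode[OF assms(1)] unfolding inj_on_def by metis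

theorem proposition5p7:
  fixes n k :: nat
  assumes "n \<ge> 1" and "k \<ge> 2"
  shows "median_graph (pell_vertices n k) (pell_adj n k)"
proof -
  \<comment> \<open>only \<open>0 < k\<close> is used, and \<open>n = 0\<close> would do as well\<close>
  have k: "0 < k"
    using assms(2) by simp
  interpret graph_distance "pell_vertices n k" "pell_adj n k" "pell_dist k"
    using k by (rule pell_graph_distance)
  show ?thesis
  proof (rule median_graphI)
    show "pell_vertices n k \<noteq> {}"
      using replicate_0_in_pell_vertices[OF k, of n] by blast
  qed (rule pell_unique_median[OF k])
qed

end
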